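(* Let $p > 3$ be a prime number. Then $p$ is a Cantor prime if and only if $p$ satisfies an equation of the form $2pK + 1 = 3^q$, where $q$ is the multiplicative order of $3$ modulo $p$ and $K$ is a sum of distinct powers $3^d$ with integer exponents $0 \le d < q$ (equivalently, $K = \sum_{i=1}^{n} 3^{d_i}$ for some $n \ge 1$ and distinct integers $0 \le d_i < q$).
   Context: The middle-third Cantor set $\mathcal{C}_3$ is the set of points of $[0,1]$ admitting a base-$3$ expansion $\sum_{k\ge 1} a_k 3^{-k}$ with every digit $a_k \in \{0,2\}$. A Cantor prime is a prime number $p$ such that $1/p \in \mathcal{C}_3$. *)

theory Defs
  imports "HOL-Analysis.Analysis" "HOL-Number_Theory.Number_Theory"
begin

text \<open>Middle-third Cantor set: points admitting a base-3 expansion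
  sum_{k>=1} a_k 3^(-k) with all digits in {0,2}. Digit a k here is the
  (k+1)-th digit.\<close>
definition cantor_set3 :: "real set" where
  "cantor_set3 = {x. \<exists>a::nat \<Rightarrow> nat. (\<forall>k. a k \<in> {0, 2}) \<and>
                       (\<lambda>k. real (a k) / 3 ^ (k + 1)) sums x}"

definition cantor_prime :: "nat \<Rightarrow> bool" where
  "cantor_prime p \<longleftrightarrow> prime p \<and> 1 / real p \<in> cantor_set3"

end

theory Submission
  imports Defs
begin

text \<open>If 1/p has ternary digits a_k in {0,2} and q is the order of 3 modulo p, write
  3^q = p m + 1. Multiplying the expansion by 3^q shifts it by q places: the integer formed
  by the first q digits lies within distance 1 of 3^q/p = m + 1/p, so it equals m, and its
  digits in {0,2} make m = 2K with K a sum of distinct powers of 3 below 3^q. Conversely,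
  the purely periodic expansion repeating the q digits of 2K sums to 2K/(3^q - 1) = 1/p.\<close>

definition digit_block :: "nat \<Rightarrow> (nat \<Rightarrow> nat) \<Rightarrow> nat \<Rightarrow> nat" where
  "digit_block b a q = (\<Sum>d<q. a (q - 1 - d) * b ^ d)"

lemma digit_block_indicator:
  assumes "D \<subseteq> {..<q}" and "\<And>d. d < q \<Longrightarrow> a (q - 1 - d) = (if d \<in> D then c else 0)"
  shows "digit_block b a q = c * (\<Sum>d\<in>D. b ^ d)"
proof -
  have "digit_block b a q = (\<Sum>d<q. if d \<in> D then c * b ^ d else 0)"
    unfolding digit_block_def using assms(2) by (intro sum.cong) auto
  also have "\<dots> = (\<Sum>d\<in>{..<q} \<inter> D. c * b ^ d)"
    by (rule sum.inter_restrict[symmetric]) simp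
  also have "{..<q} \<inter> D = D" using assms(1) by blast
  finally show ?thesis by (simp add: sum_distrib_left)
qed

lemma partial_expansion_eq_digit_block:
  fixes b :: nat
  assumes "b > 0"
  shows "(\<Sum>k<q. real (a k) / real b ^ (k + 1)) = real (digit_block b a q) / real b ^ q"
proof -
  have "(\<Sum>k<q. real (a k) / real b ^ (k + 1)) = (\<Sum>k<q. real (a k * b ^ (q - 1 - k)) / real b ^ q)"
  proof (rule sum.cong)
    fix k assume "k \<in> {..<q}"
    then have "k + 1 + (q - 1 - k) = q" by simp
    then have "real b ^ q = real b ^ (k + 1) * real b ^ (q - 1 - k)"
      by (metis power_add)
    then show "real (a k) / real b ^ (k + 1) = real (a k * b ^ (q - 1 - k)) / real b ^ q"
      using assms by simp
  qed simp
  also have "\<dots> = real (\<Sum>k<q. a k * b ^ (q - 1 - k)) / real b ^ q"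
    by (simp add: sum_divide_distrib)
  also have "(\<Sum>k<q. a k * b ^ (q - 1 - k)) = digit_block b a q"
    unfolding digit_block_def
    by (subst sum.nat_diff_reindex[symmetric]) (rule sum.cong, auto)
  finally show ?thesis .
qed

lemma expansion_tail_bounds:
  fixes b :: nat and x :: real
  assumes "b \<ge> 2" and "\<And>k. a k < b"
    and "(\<lambda>k. real (a k) / real b ^ (k + 1)) sums x"
  shows "real (digit_block b a q) \<le> real b ^ q * x"
    and "real b ^ q * x \<le> real (digit_block b a q) + 1"
proof -
  define f where "f k = real (a k) / real b ^ (k + 1)" for k
  define g where "g k = real (b - 1) / real b ^ (k + 1)" for k
  have b: "real b \<ge> 2" using assms(1) by simp
  have "g = (\<lambda>k. real (b - 1) / real b * (1 / real b) ^ k)"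
    by (rule ext) (simp add: g_def power_divide)
  then have "g sums (real (b - 1) / real b * (1 / (1 - 1 / real b)))"
    using b by (simp only:) (intro sums_mult geometric_sums, simp)
  moreover have "real (b - 1) / real b * (1 / (1 - 1 / real b)) = 1"
    using assms(1) b by (simp add: of_nat_diff divide_simps)
  ultimately have "g sums 1" by (simp only:)
  moreover have "(\<lambda>i. g (i + q)) = (\<lambda>i. g i / real b ^ q)"
    by (simp add: g_def power_add mult_ac)
  ultimately have g_tail: "(\<lambda>i. g (i + q)) sums (1 / real b ^ q)"
    using sums_divide by fastforce
  have "f sums x" unfolding f_def[abs_def] by (fact assms(3))
  then have f_tail: "(\<lambda>i. f (i + q)) sums (x - (\<Sum>k<q. f k))"
    by (simp add: sums_iff_shift)
  have "f k \<le> g k" for k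
    using assms(2)[of k] by (simp add: f_def g_def divide_right_mono of_nat_diff)
  then have "x - (\<Sum>k<q. f k) \<le> 1 / real b ^ q"
    using f_tail g_tail by (rule sums_le)
  moreover have "0 \<le> x - (\<Sum>k<q. f k)"
    by (rule sums_le[OF _ sums_zero f_tail]) (simp add: f_def)
  moreover have "(\<Sum>k<q. f k) = real (digit_block b a q) / real b ^ q"
    unfolding f_def using assms(1) by (intro partial_expansion_eq_digit_block) simp
  moreover have B: "0 < real b ^ q" using b by simp
  ultimately have "0 \<le> real b ^ q * x - real (digit_block b a q)"
    and "real b ^ q * x - real (digit_block b a q) \<le> 1"
    using assms(1)
    by (simp_all add: right_diff_distrib pos_le_divide_eq[OF B] pos_divide_le_eq[OF B] mult.commute)
  then show "real (digit_block b a q) \<le> real b ^ q * x"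
    and "real b ^ q * x \<le> real (digit_block b a q) + 1"
    by simp_all
qed

lemma digit_block_of_reciprocal:
  fixes b p :: nat
  assumes "b \<ge> 2" and "\<And>k. a k < b"
    and "(\<lambda>k. real (a k) / real b ^ (k + 1)) sums (1 / real p)"
    and "p > 1" and "[b ^ q = 1] (mod p)"
  shows "p * digit_block b a q + 1 = b ^ q"
proof -
  have "p dvd b ^ q - 1" using assms(5) by (rule cong_to_1_nat)
  then obtain m where "b ^ q - 1 = p * m" by (elim dvdE)
  moreover have "b ^ q \<ge> 1" using assms(1) by simp
  ultimately have m: "b ^ q = p * m + 1" by linarith
  have p: "0 < 1 / real p" "1 / real p < 1" using assms(4) by simp_all
  have "real b ^ q * (1 / real p) = real m + 1 / real p"
    using arg_cong[OF m, of real] assms(4) by (simp add: field_simps)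
  with expansion_tail_bounds[OF assms(1-3), of q] p
  have "real (digit_block b a q) < real m + 1" "real m < real (digit_block b a q) + 1"
    by linarith+
  then have "digit_block b a q = m" by linarith
  with m show ?thesis by simp
qed

lemma periodic_expansion_sums:
  fixes b :: nat
  assumes "b \<ge> 2" and "q > 0" and "\<And>k. a k < b" and "\<And>k. a (k + q) = a k"
  shows "(\<lambda>k. real (a k) / real b ^ (k + 1)) sums (real (digit_block b a q) / (real b ^ q - 1))"
proof -
  define f where "f k = real (a k) / real b ^ (k + 1)" for k
  define N where "N = real (digit_block b a q)"
  have b: "real b \<ge> 2" using assms(1) by simp
  have "norm (f k) \<le> (1 / real b) ^ k" for k
  proof -
    have "norm (f k) = f k" by (simp add: f_def)
    also have "\<dots> \<le> real b / real b ^ (k + 1)"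
      unfolding f_def using assms(3)[of k] by (intro divide_right_mono) auto
    also have "\<dots> = (1 / real b) ^ k"
      using b by (simp add: power_divide)
    finally show ?thesis .
  qed
  moreover have "summable (\<lambda>k. (1 / real b) ^ k)" using b by simp
  ultimately have "summable f" by (rule summable_comparison_test'[rotated])
  then have S: "f sums (suminf f)" by (rule summable_sums)
  have "(\<lambda>i. f (i + q)) = (\<lambda>i. f i / real b ^ q)"
    by (simp add: f_def assms(4) power_add mult_ac)
  then have "(\<lambda>i. f (i + q)) sums (suminf f / real b ^ q)"
    using sums_divide[OF S] by simp
  then have "f sums (suminf f / real b ^ q + (\<Sum>k<q. f k))"
    by (simp add: sums_iff_shift)
  moreover have "(\<Sum>k<q. f k) = N / real b ^ q"
    unfolding f_def N_def using assms(1) by (intro partial_expansion_eq_digit_block) simp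
  ultimately have "suminf f = (suminf f + N) / real b ^ q"
    using S sums_unique2 by (simp add: add_divide_distrib)
  moreover have B: "real b ^ q > 1" using b assms(2) by (simp add: one_less_power)
  ultimately have "suminf f * real b ^ q = suminf f + N"
    using assms(1) by (simp add: eq_divide_eq)
  then have "suminf f = N / (real b ^ q - 1)"
    using B by (simp add: eq_divide_eq algebra_simps)
  with S have "f sums (N / (real b ^ q - 1))" by simp
  then show ?thesis unfolding f_def[abs_def] N_def .
qed

lemma reciprocal_in_cantor_set3_imp_digit_sum:
  fixes p :: nat
  assumes "1 / real p \<in> cantor_set3" and "p > 1" and "[3 ^ q = 1] (mod p)"
  obtains D where "D \<subseteq> {..<q}" and "2 * p * (\<Sum>d\<in>D. 3 ^ d) + 1 = 3 ^ q"
proof -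
  have base_3: "real (3::nat) ^ n = 3 ^ n" for n by simp
  obtain a where a: "\<forall>k. a k \<in> {0, 2}"
    and "(\<lambda>k. real (a k) / 3 ^ (k + 1)) sums (1 / real p)"
    using assms(1) unfolding cantor_set3_def by blast
  moreover have "a k < 3" for k using a[rule_format, of k] by auto
  ultimately have "p * digit_block 3 a q + 1 = 3 ^ q"
    using assms(2,3) by (intro digit_block_of_reciprocal) (auto simp: base_3)
  moreover define D where "D = {d. d < q \<and> a (q - 1 - d) = 2}"
  moreover have "digit_block 3 a q = 2 * (\<Sum>d\<in>D. 3 ^ d)"
    using a by (intro digit_block_indicator) (auto simp: D_def)
  ultimately have "2 * p * (\<Sum>d\<in>D. 3 ^ d) + 1 = 3 ^ q" by (simp add: ac_simps)
  then show ?thesis by (rule that[rotated]) (auto simp: D_def)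
qed

lemma digit_sum_imp_reciprocal_in_cantor_set3:
  fixes p :: nat
  assumes "q > 0" and "D \<subseteq> {..<q}" and "2 * p * (\<Sum>d\<in>D. 3 ^ d) + 1 = 3 ^ q"
  shows "1 / real p \<in> cantor_set3"
proof -
  define K where "K = (\<Sum>d\<in>D. 3 ^ d :: nat)"
  define a where "a k = (if q - 1 - k mod q \<in> D then 2 else 0 :: nat)" for k
  have K: "2 * p * K + 1 = 3 ^ q" using assms(3) by (simp add: K_def)
  have "digit_block 3 a q = 2 * K"
    unfolding K_def using assms(2) by (intro digit_block_indicator) (auto simp: a_def)
  moreover have "K > 0"
    using K one_less_power[of "3::nat" q] assms(1) by (cases K) auto
  moreover have "(3::real) ^ q - 1 = 2 * real p * real K"
    using arg_cong[OF K, of real] by simp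
  ultimately have "real (digit_block 3 a q) / (3 ^ q - 1) = 1 / real p"
    by simp
  moreover have "(\<lambda>k. real (a k) / real 3 ^ (k + 1)) sums (real (digit_block 3 a q) / (real 3 ^ q - 1))"
    using assms(1) by (intro periodic_expansion_sums) (auto simp: a_def)
  ultimately have "(\<lambda>k. real (a k) / 3 ^ (k + 1)) sums (1 / real p)"
    by simp
  moreover have "\<forall>k. a k \<in> {0, 2}" by (simp add: a_def)
  ultimately show ?thesis unfolding cantor_set3_def by blast
qed

theorem theorem2p1:
  fixes p :: nat
  assumes "prime p" and "p > 3"
  shows "cantor_prime p \<longleftrightarrow>
    (\<exists>K::nat. \<exists>D::nat set. D \<noteq> {} \<and> D \<subseteq> {..<ord p 3} \<and>
        K = (\<Sum>d\<in>D. 3 ^ d) \<and> 2 * p * K + 1 = 3 ^ (ord p 3))"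
proof -
  define q where "q = ord p 3"
  have "coprime p 3"
    using assms by (intro prime_imp_coprime) (auto dest: dvd_imp_le)
  then have q_pos: "q > 0" and cong: "[3 ^ q = 1] (mod p)"
    using ord_works[of 3 p] ord_eq_0[of p 3] by (auto simp: q_def)
  have nonempty: "D \<noteq> {}" if "2 * p * (\<Sum>d\<in>D. 3 ^ d) + 1 = 3 ^ q" for D :: "nat set"
    using that one_less_power[of "3::nat" q] q_pos by auto
  show ?thesis
  proof
    assume "cantor_prime p"
    with assms(2) cong obtain D where "D \<subseteq> {..<q}" "2 * p * (\<Sum>d\<in>D. 3 ^ d) + 1 = 3 ^ q"
      unfolding cantor_prime_def by (auto elim: reciprocal_in_cantor_set3_imp_digit_sum)
    with nonempty show "\<exists>K D. D \<noteq> {} \<and> D \<subseteq> {..<ord p 3} \<and>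
        K = (\<Sum>d\<in>D. 3 ^ d) \<and> 2 * p * K + 1 = 3 ^ ord p 3"
      unfolding q_def by blast
  next
    assume "\<exists>K D. D \<noteq> {} \<and> D \<subseteq> {..<ord p 3} \<and>
        K = (\<Sum>d\<in>D. 3 ^ d) \<and> 2 * p * K + 1 = 3 ^ ord p 3"
    with q_pos show "cantor_prime p"
      unfolding cantor_prime_def q_def
      using assms(1) digit_sum_imp_reciprocal_in_cantor_set3 by blast
  qed
qed

end
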